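(* (i) If $r+s=0$, then $a^*_i=\frac{d-r}{2}$ for $0\le i\le d-1$ and $a^*_d=\frac{d(r+1)}{2}$. (ii) If $r-s=0$, then $a^*_i=\frac d2$ for $0\le i\le d$.
   Context: Fix an integer $d\ge0$ and $r,s\in(-1,\infty)$. Write $(x)_i=x(x+1)\cdots(x+i-1)$, $(x)_0=1$. For $0\le i\le d$ put $\theta^*_i=i$. Put $b^*_i=\frac{(d-i)(i-d-s)(2d-2i+r+s+2)_i}{(2d-2i+r+s)_{i+1}}$ ($0\le i\le d-1$), $c^*_i=\frac{i(i-d-r-1)(d-i+r+s+1)_{d-i}}{(d-i+r+s+2)_{d-i+1}}$ ($1\le i\le d$), $b^*_d=c^*_0=0$, and $a^*_i=\theta^*_0-b^*_i-c^*_i$ for $0\le i\le d$. *)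

theory Defs
  imports Complex_Main
begin

text \<open>Rising factorial (x)_i is the library's pochhammer x i.\<close>

definition thetastar :: "nat \<Rightarrow> real" where
  "thetastar i = real i"

definition bstar :: "nat \<Rightarrow> real \<Rightarrow> real \<Rightarrow> nat \<Rightarrow> real" where
  "bstar d r s i = (if i < d then
     (real d - real i) * (real i - real d - s) * pochhammer (2 * real d - 2 * real i + r + s + 2) i
       / pochhammer (2 * real d - 2 * real i + r + s) (i + 1)
   else 0)"

definition cstar :: "nat \<Rightarrow> real \<Rightarrow> real \<Rightarrow> nat \<Rightarrow> real" where
  "cstar d r s i = (if 1 \<le> i \<and> i \<le> d then
     real i * (real i - real d - r - 1) * pochhammer (real d - real i + r + s + 1) (d - i)
       / pochhammer (real d - real i + r + s + 2) (d - i + 1)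
   else 0)"

definition astar :: "nat \<Rightarrow> real \<Rightarrow> real \<Rightarrow> nat \<Rightarrow> real" where
  "astar d r s i = thetastar 0 - bstar d r s i - cstar d r s i"

end

theory Submission
  imports Defs
begin

text \<open>Both Pochhammer quotients collapse to rational functions,
  \<open>(x + 2)_i / (x)_(i+1) = (x + i + 1) / (x (x + 1))\<close> and
  \<open>(y)_n / (y + 1)_(n+1) = y / ((y + n) (y + n + 1))\<close>.
  For \<open>s = -r\<close> or \<open>s = r\<close> and \<open>i < d\<close>, one linear factor of each denominator then cancels
  against the numerator, \<open>b\<^sup>*\<^sub>i\<close> and \<open>c\<^sup>*\<^sub>i\<close> acquire the common denominator
  \<open>2 (2(d - i) + r + s + 1)\<close>, and their sum is a constant multiple of it.\<close>

lemma pochhammer_shift2_ratio: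
  fixes x :: "'a :: field_char_0"
  assumes "pochhammer x (n + 2) \<noteq> 0"
  shows "pochhammer (x + 2) n / pochhammer x (n + 1) = (x + of_nat n + 1) / (x * (x + 1))"
proof -
  have left: "pochhammer x (n + 2) = x * (x + 1) * pochhammer (x + 2) n"
    by (simp add: pochhammer_rec numeral_2_eq_2 add.assoc)
  have right: "pochhammer x (n + 2) = pochhammer x (n + 1) * (x + of_nat n + 1)"
    by (simp add: pochhammer_Suc numeral_2_eq_2 add.assoc)
  have "x * (x + 1) \<noteq> 0" "pochhammer x (n + 1) \<noteq> 0"
    using assms left right by auto
  with left right show ?thesis
    by (simp add: divide_simps) (simp add: ac_simps)
qed

lemma pochhammer_shift1_ratio:
  fixes y :: "'a :: field_char_0"
  assumes "pochhammer y (n + 2) \<noteq> 0"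
  shows "pochhammer y n / pochhammer (y + 1) (n + 1) = y / ((y + of_nat n) * (y + of_nat n + 1))"
proof -
  have left: "pochhammer y (n + 2) = y * pochhammer (y + 1) (n + 1)"
    by (simp add: pochhammer_rec numeral_2_eq_2)
  have right: "pochhammer y (n + 2) = pochhammer y n * (y + of_nat n) * (y + of_nat n + 1)"
    by (simp add: pochhammer_Suc numeral_2_eq_2 add.assoc)
  have "pochhammer (y + 1) (n + 1) \<noteq> 0" "(y + of_nat n) * (y + of_nat n + 1) \<noteq> 0"
    using assms left right by auto
  with left right show ?thesis
    by (simp add: divide_simps)
qed

lemma bstar_closed_form:
  assumes "i < d" and "r + s > -2"
  shows "bstar d r s i = (real d - real i) * (real i - real d - s) * (2 * real d - real i + r + s + 1)
     / ((2 * real d - 2 * real i + r + s) * (2 * real d - 2 * real i + r + s + 1))"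
proof -
  define x where "x = 2 * real d - 2 * real i + r + s"
  have "x > 0" using assms unfolding x_def by linarith
  then have "pochhammer x (i + 2) \<noteq> 0"
    by (metis pochhammer_pos less_irrefl)
  have "bstar d r s i = (real d - real i) * (real i - real d - s)
      * (pochhammer (x + 2) i / pochhammer x (i + 1))"
    using assms(1) by (simp add: bstar_def x_def)
  also have "\<dots> = (real d - real i) * (real i - real d - s) * ((x + real i + 1) / (x * (x + 1)))"
    by (simp only: pochhammer_shift2_ratio[OF \<open>pochhammer x (i + 2) \<noteq> 0\<close>])
  also have "x + real i + 1 = 2 * real d - real i + r + s + 1"
    by (simp add: x_def)
  finally show ?thesis
    by (simp add: x_def)
qed

lemma cstar_closed_form:
  assumes "i < d" and "r + s > -2"
  shows "cstar d r s i = real i * (real i - real d - r - 1) * (real d - real i + r + s + 1)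
     / ((2 * real d - 2 * real i + r + s + 1) * (2 * real d - 2 * real i + r + s + 2))"
proof -
  define y where "y = real d - real i + r + s + 1"
  have "y > 0" using assms unfolding y_def by linarith
  then have "pochhammer y (d - i + 2) \<noteq> 0"
    by (metis pochhammer_pos less_irrefl)
  have "cstar d r s i = real i * (real i - real d - r - 1)
      * (pochhammer y (d - i) / pochhammer (y + 1) (d - i + 1))"
  proof (cases "i = 0")
    case False
    with assms(1) show ?thesis by (simp add: cstar_def y_def add.assoc)
  qed (simp add: cstar_def)
  also have "\<dots> = real i * (real i - real d - r - 1)
      * (y / ((y + real (d - i)) * (y + real (d - i) + 1)))"
    by (simp only: pochhammer_shift1_ratio[OF \<open>pochhammer y (d - i + 2) \<noteq> 0\<close>])
  also have "y + real (d - i) = 2 * real d - 2 * real i + r + s + 1"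
    using assms(1) by (simp add: y_def)
  finally show ?thesis
    by (simp add: y_def add.assoc)
qed

lemma astar_at_d: "astar d r s d = real d * (r + 1) / (r + s + 2)"
proof (cases "d = 0")
  case False
  then have "cstar d r s d = - (real d * (r + 1)) / (r + s + 2)"
    by (simp add: cstar_def algebra_simps)
  then show ?thesis by (simp add: astar_def thetastar_def bstar_def)
qed (simp add: astar_def thetastar_def bstar_def cstar_def)

lemma astar_opposite_params:
  assumes "i < d"
  shows "astar d r (- r) i = (real d - r) / 2"
proof -
  define n where "n = real d - real i"
  have "n > 0" using assms by (simp add: n_def)
  have d: "real d = real i + n" by (simp add: n_def)
  have "bstar d r (- r) i = n * ((r - n) * (real i + 2 * n + 1)) / (n * (2 * (2 * n + 1)))"
    using bstar_closed_form[OF assms, of r "- r"] by (simp add: d algebra_simps)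
  also have "\<dots> = (r - n) * (real i + 2 * n + 1) / (2 * (2 * n + 1))"
    using \<open>n > 0\<close> by simp
  finally have b: "bstar d r (- r) i = \<dots>" .
  have "cstar d r (- r) i = (n + 1) * (- real i * (n + r + 1)) / ((n + 1) * (2 * (2 * n + 1)))"
    using cstar_closed_form[OF assms, of r "- r"] by (simp add: d algebra_simps)
  also have "\<dots> = - real i * (n + r + 1) / (2 * (2 * n + 1))"
    using \<open>n > 0\<close> by simp
  finally have c: "cstar d r (- r) i = \<dots>" .
  have "bstar d r (- r) i + cstar d r (- r) i
      = ((r - n) * (real i + 2 * n + 1) + - real i * (n + r + 1)) / (2 * (2 * n + 1))"
    unfolding b c by (rule add_divide_distrib[symmetric])
  also have "(r - n) * (real i + 2 * n + 1) + - real i * (n + r + 1) = (r - real d) * (2 * n + 1)"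
    by (simp add: d algebra_simps)
  also have "(r - real d) * (2 * n + 1) / (2 * (2 * n + 1)) = (r - real d) / 2"
    using \<open>n > 0\<close> by (intro mult_divide_mult_cancel_right) simp
  finally show ?thesis
    by (simp add: astar_def thetastar_def)
qed

lemma astar_equal_params:
  assumes "i < d" and "r > -1"
  shows "astar d r r i = real d / 2"
proof -
  define n where "n = real d - real i"
  have "n \<ge> 1" using assms by (simp add: n_def)
  have d: "real d = real i + n" by (simp add: n_def)
  have "r + r > -2" using assms(2) by simp
  have "bstar d r r i
      = (n + r) * (- n * (real i + 2 * n + 2 * r + 1)) / ((n + r) * (2 * (2 * n + 2 * r + 1)))"
    using bstar_closed_form[OF assms(1) \<open>r + r > -2\<close>] by (simp add: d algebra_simps)
  also have "\<dots> = - n * (real i + 2 * n + 2 * r + 1) / (2 * (2 * n + 2 * r + 1))"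
    using \<open>n \<ge> 1\<close> assms(2) by simp
  finally have b: "bstar d r r i = \<dots>" .
  have "cstar d r r i
      = (n + r + 1) * (- real i * (n + 2 * r + 1)) / ((n + r + 1) * (2 * (2 * n + 2 * r + 1)))"
    using cstar_closed_form[OF assms(1) \<open>r + r > -2\<close>] by (simp add: d algebra_simps)
  also have "\<dots> = - real i * (n + 2 * r + 1) / (2 * (2 * n + 2 * r + 1))"
    using \<open>n \<ge> 1\<close> assms(2) by simp
  finally have c: "cstar d r r i = \<dots>" .
  have "bstar d r r i + cstar d r r i
      = (- n * (real i + 2 * n + 2 * r + 1) + - real i * (n + 2 * r + 1)) / (2 * (2 * n + 2 * r + 1))"
    unfolding b c by (rule add_divide_distrib[symmetric])
  also have "- n * (real i + 2 * n + 2 * r + 1) + - real i * (n + 2 * r + 1)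
      = - real d * (2 * n + 2 * r + 1)"
    by (simp add: d algebra_simps)
  also have "- real d * (2 * n + 2 * r + 1) / (2 * (2 * n + 2 * r + 1)) = - real d / 2"
    using \<open>n \<ge> 1\<close> assms(2) by (intro mult_divide_mult_cancel_right) simp
  finally show ?thesis
    by (simp add: astar_def thetastar_def)
qed

theorem lemma2p7:
  fixes d :: nat and r s :: real
  assumes "r > -1" and "s > -1"
  shows "(r + s = 0 \<longrightarrow>
            (\<forall>i < d. astar d r s i = (real d - r) / 2) \<and>
            astar d r s d = real d * (r + 1) / 2)
       \<and> (r - s = 0 \<longrightarrow> (\<forall>i \<le> d. astar d r s i = real d / 2))"
proof (intro conjI impI allI)
  fix i
  assume "r + s = 0" and "i < d"
  moreover from \<open>r + s = 0\<close> have "s = - r" by simp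
  ultimately show "astar d r s i = (real d - r) / 2"
    using astar_opposite_params by simp
next
  assume "r + s = 0"
  then show "astar d r s d = real d * (r + 1) / 2"
    by (simp add: astar_at_d)
next
  fix i
  assume "r - s = 0" and "i \<le> d"
  then have "s = r" by simp
  show "astar d r s i = real d / 2"
  proof (cases "i < d")
    case True
    then show ?thesis using astar_equal_params assms(1) \<open>s = r\<close> by simp
  next
    case False
    with \<open>i \<le> d\<close> have "i = d" by simp
    have "astar d r r d = real d * (r + 1) / (2 * (r + 1))"
      using astar_at_d[of d r r] by (simp add: algebra_simps)
    also have "\<dots> = real d / 2"
      using assms(1) by (intro mult_divide_mult_cancel_right) simp
    finally show ?thesis
      using \<open>i = d\<close> \<open>s = r\<close> by simp
  qed
qed

end
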